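(* Let $\Omega\subset\mathbb{C}^n$ be a bounded pseudoconvex Reinhardt domain, $1<p<\infty$, and $\lambda$ an admissible multi-radial weight on $\Omega$. Then the series $$K^{\Omega}_{p,\lambda}(z,w)=\sum_{\alpha\in\mathcal{S}_p(\Omega,\lambda)}\frac{e_\alpha(z)\,\overline{e_\alpha(w)}\,|e_\alpha(w)|^{p-2}}{\|e_\alpha\|^p_{p,\lambda}}$$ converges locally normally on $\Omega\times\Omega$, i.e., for every compact $K\subset\Omega\times\Omega$ the sum over $\alpha$ of the suprema over $K$ of the absolute values of the terms is finite.
   Context: A domain $\Omega$ is Reinhardt (centered at $0$) if $(e^{i\theta_1}z_1,\dots,e^{i\theta_n}z_n)\in\Omega$ whenever $z\in\Omega$, $\theta\in\mathbb{R}^n$. For a measurable $\lambda:\Omega\to[0,\infty]$, positive a.e., $\|f\|_{p,\lambda}^p=\int_\Omega|f|^p\lambda\,dV$ ($dV$ Lebesgue measure), $L^p(\Omega,\lambda)$ is the corresponding space and $A^p(\Omega,\lambda)=L^p(\Omega,\lambda)\cap\mathcal{O}(\Omega)$. The weight $\lambda$ is admissible if for each compact $K\subset\Omega$ there is $C_K>0$ with $\sup_K|f|\le C_K\|f\|_{p,\lambda}$ for all $f\in A^p(\Omega,\lambda)$; it is multi-radial if $\lambda(z)=\ell(|z_1|,\dots,|z_n|)$ for some function $\ell$. For $\alpha\in\mathbb{Z}^n$, $e_\alpha(z)=z_1^{\alpha_1}\cdots z_n^{\alpha_n}$, and $\mathcal{S}_p(\Omega,\lambda)=\{\alpha\in\mathbb{Z}^n:e_\alpha\in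 A^p(\Omega,\lambda)\}$. *)

theory Defs
  imports "HOL-Analysis.Analysis"
begin

definition reinhardt :: "(complex^'n) set \<Rightarrow> bool" where
  "reinhardt \<Omega> \<longleftrightarrow>
     (\<forall>z\<in>\<Omega>. \<forall>\<theta>::real^'n. (\<chi> i. cis (\<theta>$i) * z$i) \<in> \<Omega>)"

definition domain :: "(complex^'n) set \<Rightarrow> bool" where
  "domain \<Omega> \<longleftrightarrow> open \<Omega> \<and> connected \<Omega> \<and> \<Omega> \<noteq> {}"

definition holomorphic_n :: "(complex^'n \<Rightarrow> complex) \<Rightarrow> (complex^'n) set \<Rightarrow> bool" where
  "holomorphic_n f \<Omega> \<longleftrightarrow>
     (\<forall>z\<in>\<Omega>. \<exists>L. (f has_derivative L) (at z) \<and> (\<forall>c h. L (c *s h) = c * L h))"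

definition plurisubharmonic_on :: "(complex^'n) set \<Rightarrow> (complex^'n \<Rightarrow> real) \<Rightarrow> bool" where
  "plurisubharmonic_on \<Omega> u \<longleftrightarrow>
     (\<forall>z\<in>\<Omega>. \<forall>c. u z < c \<longrightarrow> (\<forall>\<^sub>F y in at z within \<Omega>. u y < c)) \<and>
     (\<forall>a b r. r > 0 \<and> (\<forall>\<zeta>. cmod \<zeta> \<le> r \<longrightarrow> a + \<zeta> *s b \<in> \<Omega>) \<longrightarrow>
        (\<lambda>t. u (a + (of_real r * cis t) *s b)) integrable_on {0..2*pi} \<and>
        u a \<le> integral {0..2*pi} (\<lambda>t. u (a + (of_real r * cis t) *s b)) / (2*pi))"

definition pseudoconvex :: "(complex^'n) set \<Rightarrow> bool" where
  "pseudoconvex \<Omega> \<longleftrightarrow> domain \<Omega> \<and>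
     plurisubharmonic_on \<Omega> (\<lambda>z. - ln (infdist z (- \<Omega>)))"

definition lp_pow :: "real \<Rightarrow> (complex^'n) set \<Rightarrow> (complex^'n \<Rightarrow> ennreal)
                      \<Rightarrow> (complex^'n \<Rightarrow> complex) \<Rightarrow> ennreal" where
  "lp_pow p \<Omega> lam f = (\<integral>\<^sup>+ z. indicator \<Omega> z * ennreal (cmod (f z) powr p) * lam z \<partial>lebesgue)"

definition lp_norm :: "real \<Rightarrow> (complex^'n) set \<Rightarrow> (complex^'n \<Rightarrow> ennreal)
                      \<Rightarrow> (complex^'n \<Rightarrow> complex) \<Rightarrow> real" where
  "lp_norm p \<Omega> lam f = enn2real (lp_pow p \<Omega> lam f) powr (1/p)"

definition Ap :: "real \<Rightarrow> (complex^'n) set \<Rightarrow> (complex^'n \<Rightarrow> ennreal)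
                  \<Rightarrow> (complex^'n \<Rightarrow> complex) set" where
  "Ap p \<Omega> lam = {f. holomorphic_n f \<Omega> \<and> lp_pow p \<Omega> lam f < \<infinity>}"

definition weight :: "(complex^'n) set \<Rightarrow> (complex^'n \<Rightarrow> ennreal) \<Rightarrow> bool" where
  "weight \<Omega> lam \<longleftrightarrow> lam \<in> borel_measurable lebesgue \<and>
     (AE z in lebesgue. z \<in> \<Omega> \<longrightarrow> lam z > 0)"

definition admissible :: "real \<Rightarrow> (complex^'n) set \<Rightarrow> (complex^'n \<Rightarrow> ennreal) \<Rightarrow> bool" where
  "admissible p \<Omega> lam \<longleftrightarrow>
     (\<forall>K. compact K \<and> K \<subseteq> \<Omega> \<longrightarrow>
        (\<exists>C>0. \<forall>f\<in>Ap p \<Omega> lam. \<forall>z\<in>K. cmod (f z) \<le> C * lp_norm p \<Omega> lam f))"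

definition multi_radial :: "(complex^'n) set \<Rightarrow> (complex^'n \<Rightarrow> ennreal) \<Rightarrow> bool" where
  "multi_radial \<Omega> lam \<longleftrightarrow> (\<exists>ell. \<forall>z\<in>\<Omega>. lam z = ell (\<chi> i. cmod (z$i)))"

definition e_mono :: "int^'n \<Rightarrow> complex^'n \<Rightarrow> complex" where
  "e_mono \<alpha> z = (\<Prod>i\<in>UNIV. (z$i) powi (\<alpha>$i))"

definition S_p :: "real \<Rightarrow> (complex^'n) set \<Rightarrow> (complex^'n \<Rightarrow> ennreal) \<Rightarrow> (int^'n) set" where
  "S_p p \<Omega> lam = {\<alpha>. e_mono \<alpha> \<in> Ap p \<Omega> lam}"

definition kterm :: "real \<Rightarrow> (complex^'n) set \<Rightarrow> (complex^'n \<Rightarrow> ennreal) \<Rightarrow> int^'n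
                     \<Rightarrow> complex^'n \<Rightarrow> complex^'n \<Rightarrow> complex" where
  "kterm p \<Omega> lam \<alpha> z w =
     e_mono \<alpha> z * cnj (e_mono \<alpha> w) * of_real (cmod (e_mono \<alpha> w) powr (p - 2))
       / of_real (enn2real (lp_pow p \<Omega> lam (e_mono \<alpha>)))"

end

theory Submission
  imports Defs
begin

(*
  The monomials are eigenfunctions of the coordinate dilations: if every coordinate z_i
  is multiplied by r > 1 when alpha_i >= 0 and by 1/r when alpha_i < 0, then |e_alpha|
  gets multiplied by r^(|alpha_1| + ... + |alpha_n|). For r close to 1 these dilations
  move a compact K inside a fixed compact neighbourhood of K in Omega, so admissibility
  on that neighbourhood yields |e_alpha| <= C r^-|alpha| ||e_alpha|| on K. Each term of
  the series is then bounded on K x K by C^p r^(-p |alpha|), which is summable over Z^n.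
  Only the openness of Omega and the admissibility of lambda enter the argument.
*)

lemma sum_power_inj_le_geometric:
  fixes \<rho> :: real
  assumes "0 \<le> \<rho>" "\<rho> < 1" "finite A" "inj_on g A"
  shows "(\<Sum>a\<in>A. \<rho> ^ g a) \<le> 1 / (1 - \<rho>)"
proof -
  have "(\<Sum>a\<in>A. \<rho> ^ g a) = (\<Sum>n\<in>g ` A. \<rho> ^ n)"
    using assms(4) by (simp add: sum.reindex)
  also have "\<dots> \<le> (\<Sum>n. \<rho> ^ n)"
    using assms by (intro sum_le_suminf summable_geometric) auto
  also have "\<dots> = 1 / (1 - \<rho>)"
    using assms by (simp add: suminf_geometric)
  finally show ?thesis .
qed

lemma sum_power_abs_int_le:
  fixes \<rho> :: real and P :: "int set"
  assumes "0 \<le> \<rho>" "\<rho> < 1" "finite P"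
  shows "(\<Sum>k\<in>P. \<rho> ^ nat \<bar>k\<bar>) \<le> 2 / (1 - \<rho>)"
proof -
  have inj_nonneg: "inj_on (\<lambda>k. nat \<bar>k\<bar>) {k\<in>P. 0 \<le> k}"
    and inj_neg: "inj_on (\<lambda>k. nat \<bar>k\<bar>) {k\<in>P. \<not> 0 \<le> k}"
    by (auto simp: inj_on_def)
  have "P = {k\<in>P. 0 \<le> k} \<union> {k\<in>P. \<not> 0 \<le> k}" by auto
  then have "(\<Sum>k\<in>P. \<rho> ^ nat \<bar>k\<bar>)
      = (\<Sum>k\<in>{k\<in>P. 0 \<le> k}. \<rho> ^ nat \<bar>k\<bar>)
        + (\<Sum>k\<in>{k\<in>P. \<not> 0 \<le> k}. \<rho> ^ nat \<bar>k\<bar>)"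
    using assms(3) by (metis (no_types, lifting) sum.union_disjoint disjoint_iff finite_Un mem_Collect_eq)
  also have "\<dots> \<le> 1 / (1 - \<rho>) + 1 / (1 - \<rho>)"
    using assms inj_nonneg inj_neg by (intro add_mono sum_power_inj_le_geometric) auto
  finally show ?thesis by simp
qed

lemma sum_prod_power_abs_le:
  fixes \<rho> :: real and F :: "(int^'n) set"
  assumes "0 \<le> \<rho>" "\<rho> < 1" "finite F"
  shows "(\<Sum>\<alpha>\<in>F. \<Prod>i\<in>UNIV. \<rho> ^ nat \<bar>\<alpha>$i\<bar>) \<le> (2 / (1 - \<rho>)) ^ CARD('n)"
proof -
  define P where "P i = (\<lambda>\<alpha>. \<alpha>$i) ` F" for i
  have finite_P: "finite (P i)" for i
    using assms(3) by (simp add: P_def)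
  have F_sub: "F \<subseteq> vec_lambda ` (PiE UNIV P)"
  proof
    fix \<alpha> assume "\<alpha> \<in> F"
    then have "vec_nth \<alpha> \<in> PiE UNIV P" by (auto simp: P_def)
    then show "\<alpha> \<in> vec_lambda ` (PiE UNIV P)" by (metis image_eqI vec_nth_inverse)
  qed
  have "(\<Sum>\<alpha>\<in>F. \<Prod>i\<in>UNIV. \<rho> ^ nat \<bar>\<alpha>$i\<bar>)
      \<le> (\<Sum>\<alpha>\<in>vec_lambda ` (PiE UNIV P). \<Prod>i\<in>UNIV. \<rho> ^ nat \<bar>\<alpha>$i\<bar>)"
    using F_sub finite_P assms by (intro sum_mono2) (auto simp: finite_PiE intro: prod_nonneg)
  also have "\<dots> = (\<Sum>g\<in>PiE UNIV P. \<Prod>i\<in>UNIV. \<rho> ^ nat \<bar>g i\<bar>)"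
    by (subst sum.reindex) (auto simp: inj_on_def vec_lambda_inject)
  also have "\<dots> = (\<Prod>i\<in>UNIV. \<Sum>k\<in>P i. \<rho> ^ nat \<bar>k\<bar>)"
    by (rule prod_sum_PiE[symmetric]) (auto simp: finite_P)
  also have "\<dots> \<le> (\<Prod>i\<in>(UNIV::'n set). 2 / (1 - \<rho>))"
    using assms finite_P by (intro prod_mono) (auto intro: sum_nonneg sum_power_abs_int_le)
  finally show ?thesis by simp
qed

lemma infsum_ennreal_prod_power_abs_le:
  fixes \<rho> c :: real and A :: "(int^'n) set"
  assumes "0 \<le> \<rho>" "\<rho> < 1" "0 \<le> c"
  shows "(\<Sum>\<^sub>\<infinity>\<alpha>\<in>A. ennreal (c * (\<Prod>i\<in>UNIV. \<rho> ^ nat \<bar>\<alpha>$i\<bar>)))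
       \<le> ennreal (c * (2 / (1 - \<rho>)) ^ CARD('n))"
proof (rule infsum_le_finite_sums)
  fix F assume "finite F" "F \<subseteq> A"
  have "(\<Sum>\<alpha>\<in>F. ennreal (c * (\<Prod>i\<in>UNIV. \<rho> ^ nat \<bar>\<alpha>$i\<bar>)))
      = ennreal (c * (\<Sum>\<alpha>\<in>F. \<Prod>i\<in>UNIV. \<rho> ^ nat \<bar>\<alpha>$i\<bar>))"
    using assms by (simp add: sum_ennreal prod_nonneg sum_distrib_left)
  also have "\<dots> \<le> ennreal (c * (2 / (1 - \<rho>)) ^ CARD('n))"
    using sum_prod_power_abs_le[OF assms(1,2) \<open>finite F\<close>] assms(3)
    by (intro ennreal_leI mult_left_mono)
  finally show "(\<Sum>\<alpha>\<in>F. ennreal (c * (\<Prod>i\<in>UNIV. \<rho> ^ nat \<bar>\<alpha>$i\<bar>)))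
      \<le> ennreal (c * (2 / (1 - \<rho>)) ^ CARD('n))" .
qed (simp add: nonneg_summable_on_complete)

definition monomial_scaling :: "real \<Rightarrow> int^'n \<Rightarrow> complex^'n \<Rightarrow> complex^'n" where
  "monomial_scaling r \<alpha> z = (\<chi> i. of_real (if 0 \<le> \<alpha>$i then r else inverse r) * z$i)"

lemma norm_e_mono_monomial_scaling:
  assumes "r > 0"
  shows "cmod (e_mono \<alpha> (monomial_scaling r \<alpha> z))
       = (\<Prod>i\<in>UNIV. r ^ nat \<bar>\<alpha>$i\<bar>) * cmod (e_mono \<alpha> z)"
proof -
  have factor: "cmod (of_real (if 0 \<le> \<alpha>$i then r else inverse r) powi (\<alpha>$i)) = r ^ nat \<bar>\<alpha>$i\<bar>" for i
  proof (cases "0 \<le> \<alpha>$i")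
    case True
    then show ?thesis using assms by (simp add: power_int_nonneg_exp norm_power)
  next
    case False
    then have "cmod (of_real (inverse r) powi (\<alpha>$i)) = inverse r powi (\<alpha>$i)"
      using assms by (simp add: norm_power_int norm_inverse)
    also have "\<dots> = r powi (- (\<alpha>$i))" by (simp add: power_int_inverse power_int_minus)
    also have "\<dots> = r ^ nat \<bar>\<alpha>$i\<bar>" using False by (simp add: power_int_nonneg_exp)
    finally show ?thesis using False by simp
  qed
  have "cmod (e_mono \<alpha> (monomial_scaling r \<alpha> z))
      = (\<Prod>i\<in>UNIV. cmod (of_real (if 0 \<le> \<alpha>$i then r else inverse r) powi (\<alpha>$i)) * cmod (z$i powi (\<alpha>$i)))"
    unfolding e_mono_def monomial_scaling_def
    by (simp add: prod_norm[symmetric] power_int_mult_distrib norm_mult del: of_real_inverse)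
  also have "\<dots> = (\<Prod>i\<in>UNIV. r ^ nat \<bar>\<alpha>$i\<bar>) * cmod (e_mono \<alpha> z)"
    unfolding factor e_mono_def by (simp add: prod.distrib prod_norm)
  finally show ?thesis .
qed

lemma norm_monomial_scaling_diff_le:
  assumes "r \<ge> 1"
  shows "norm (monomial_scaling r \<alpha> z - z) \<le> (r - 1) * norm z"
proof -
  have scale_factor: "\<bar>(if 0 \<le> \<alpha>$i then r else inverse r) - 1\<bar> \<le> r - 1" for i
  proof -
    have "1 - inverse r = (r - 1) / r" using assms by (simp add: field_simps)
    also have "\<dots> \<le> r - 1" using assms by (simp add: divide_le_eq mult_le_cancel_left1)
    finally have "1 - inverse r \<le> r - 1" .
    moreover have "inverse r \<le> 1" using assms by (simp add: inverse_le_1_iff)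
    ultimately show ?thesis using assms by auto
  qed
  have "cmod ((monomial_scaling r \<alpha> z - z) $ i) \<le> (r - 1) * cmod (z$i)" for i
  proof -
    have "(monomial_scaling r \<alpha> z - z) $ i = of_real ((if 0 \<le> \<alpha>$i then r else inverse r) - 1) * z$i"
      unfolding monomial_scaling_def by (simp add: algebra_simps del: of_real_inverse)
    then have "cmod ((monomial_scaling r \<alpha> z - z) $ i)
        = \<bar>(if 0 \<le> \<alpha>$i then r else inverse r) - 1\<bar> * cmod (z$i)"
      by (simp only: norm_mult norm_of_real)
    then show ?thesis
      using mult_right_mono[OF scale_factor[of i] norm_ge_zero[of "z$i"]] by linarith
  qed
  then have "norm (monomial_scaling r \<alpha> z - z) \<le> L2_set (\<lambda>i. (r - 1) * cmod (z$i)) UNIV"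
    unfolding norm_vec_def by (intro L2_set_mono) auto
  also have "\<dots> = (r - 1) * norm z"
    unfolding norm_vec_def using assms by (simp add: L2_set_right_distrib)
  finally show ?thesis .
qed

lemma admissible_e_mono_decay:
  fixes \<Omega> :: "(complex^'n) set"
  assumes "open \<Omega>" "admissible p \<Omega> lam" "compact K" "K \<subseteq> \<Omega>"
  obtains C s where "C > 0" "0 < s" "s < 1"
    "\<And>\<alpha> z. \<alpha> \<in> S_p p \<Omega> lam \<Longrightarrow> z \<in> K \<Longrightarrow>
       cmod (e_mono \<alpha> z) \<le> C * (\<Prod>i\<in>UNIV. s ^ nat \<bar>\<alpha>$i\<bar>) * lp_norm p \<Omega> lam (e_mono \<alpha>)"
proof -
  obtain \<delta> where \<delta>: "\<delta> > 0" "(\<Union>x\<in>K. cball x \<delta>) \<subseteq> \<Omega>"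
    using compact_subset_open_imp_cball_epsilon_subset[OF assms(3,1,4)] by blast
  define K' where "K' = (\<Union>x\<in>K. \<Union>y\<in>cball 0 \<delta>. {x + y})"
  have "compact K'"
    unfolding K'_def using assms(3) by (intro compact_sums') auto
  moreover have "K' \<subseteq> \<Omega>"
    using \<delta>(2) by (force simp: K'_def dist_norm)
  ultimately obtain C where C: "C > 0"
    "\<And>f z. f \<in> Ap p \<Omega> lam \<Longrightarrow> z \<in> K' \<Longrightarrow> cmod (f z) \<le> C * lp_norm p \<Omega> lam f"
    using assms(2) unfolding admissible_def by meson
  obtain R where R: "R > 0" "\<And>z. z \<in> K \<Longrightarrow> norm z \<le> R"
    using compact_imp_bounded[OF assms(3)] unfolding bounded_pos by blast
  define r where "r = 1 + \<delta> / R"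
  have r: "r > 1" "(r - 1) * R = \<delta>"
    using \<delta>(1) R(1) by (simp_all add: r_def)
  have scaled_in_K': "monomial_scaling r \<alpha> z \<in> K'" if "z \<in> K" for \<alpha> z
  proof -
    have "norm (monomial_scaling r \<alpha> z - z) \<le> (r - 1) * R"
      using norm_monomial_scaling_diff_le[of r \<alpha> z] R(2)[OF that] r(1)
      by (smt (verit) mult_left_mono)
    then have "monomial_scaling r \<alpha> z - z \<in> cball 0 \<delta>"
      using r(2) by simp
    then have "z + (monomial_scaling r \<alpha> z - z) \<in> K'"
      unfolding K'_def using that by blast
    then show ?thesis by simp
  qed
  show ?thesis
  proof (rule that[of C "inverse r"])
    show "0 < inverse r" "inverse r < 1" using r(1) by (auto simp: inverse_less_1_iff)
    fix \<alpha> z assume \<alpha>: "\<alpha> \<in> S_p p \<Omega> lam" and z: "z \<in> K"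
    define Ra where "Ra = (\<Prod>i\<in>UNIV. r ^ nat \<bar>\<alpha>$i\<bar>)"
    have "Ra > 0" unfolding Ra_def using r(1) by (intro prod_pos) auto
    have "Ra * cmod (e_mono \<alpha> z) \<le> C * lp_norm p \<Omega> lam (e_mono \<alpha>)"
      using C(2)[OF _ scaled_in_K'[OF z], of "e_mono \<alpha>" \<alpha>] \<alpha> norm_e_mono_monomial_scaling[of r \<alpha> z] r(1)
      by (simp add: S_p_def Ra_def)
    then have "cmod (e_mono \<alpha> z) \<le> C * lp_norm p \<Omega> lam (e_mono \<alpha>) / Ra"
      using \<open>Ra > 0\<close> by (simp add: pos_le_divide_eq mult.commute)
    moreover have "(\<Prod>i\<in>UNIV. inverse r ^ nat \<bar>\<alpha>$i\<bar>) = inverse Ra"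
      unfolding Ra_def by (simp add: power_inverse flip: prod_inversef[unfolded comp_def])
    ultimately show "cmod (e_mono \<alpha> z) \<le> C * (\<Prod>i\<in>UNIV. inverse r ^ nat \<bar>\<alpha>$i\<bar>) * lp_norm p \<Omega> lam (e_mono \<alpha>)"
      by (simp add: divide_inverse mult_ac)
  qed (rule C(1))
qed

lemma norm_kterm_le:
  assumes "p \<ge> 1" "B \<ge> 0"
    and "cmod (e_mono \<alpha> z) \<le> B * lp_norm p \<Omega> lam (e_mono \<alpha>)"
    and "cmod (e_mono \<alpha> w) \<le> B * lp_norm p \<Omega> lam (e_mono \<alpha>)"
  shows "cmod (kterm p \<Omega> lam \<alpha> z w) \<le> B powr p"
proof -
  define N where "N = enn2real (lp_pow p \<Omega> lam (e_mono \<alpha>))"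
  define a where "a = cmod (e_mono \<alpha> z)"
  define b where "b = cmod (e_mono \<alpha> w)"
  define c where "c = B * N powr (1/p)"
  have "a \<le> c" "b \<le> c"
    using assms(3,4) by (simp_all add: a_def b_def c_def N_def lp_norm_def)
  have "b \<ge> 0" "c \<ge> 0" "N \<ge> 0"
    using assms(2) by (simp_all add: b_def c_def N_def)
  have kterm_eq: "cmod (kterm p \<Omega> lam \<alpha> z w) = a * b powr (p - 1) / N"
  proof -
    have "b * b powr (p - 2) = b powr (p - 1)"
      using \<open>b \<ge> 0\<close> powr_add[of b 1 "p - 2"] by (cases "b = 0") auto
    then show ?thesis
      unfolding kterm_def a_def b_def N_def by (simp add: norm_mult norm_divide)
  qed
  show ?thesis
  proof (cases "N = 0")
    case True
    then show ?thesis by (simp add: kterm_eq)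
  next
    case False
    have "a * b powr (p - 1) \<le> c * c powr (p - 1)"
      using \<open>a \<le> c\<close> \<open>b \<le> c\<close> \<open>b \<ge> 0\<close> \<open>c \<ge> 0\<close> assms(1)
      by (intro mult_mono powr_mono2) auto
    also have "\<dots> = c powr p"
      using powr_add[of c 1 "p - 1"] \<open>c \<ge> 0\<close> by (cases "c = 0") auto
    also have "\<dots> = B powr p * N"
      using assms(1,2) \<open>N \<ge> 0\<close> by (simp add: c_def powr_mult powr_powr)
    finally show ?thesis
      using False \<open>N \<ge> 0\<close> by (simp add: kterm_eq divide_le_eq)
  qed
qed

lemma powr_prod_power:
  fixes s p :: real
  assumes "s > 0"
  shows "(\<Prod>i\<in>A. s ^ f i) powr p = (\<Prod>i\<in>A. (s powr p) ^ f i)"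
proof -
  have "(s ^ k) powr p = (s powr p) ^ k" for k
    using assms by (simp add: powr_realpow[symmetric] powr_powr mult.commute)
  then show ?thesis
    using assms by (simp add: prod_powr_distrib)
qed

lemma admissible_kterm_decay:
  fixes \<Omega> :: "(complex^'n) set"
  assumes "open \<Omega>" "admissible p \<Omega> lam" "p \<ge> 1" "compact K" "K \<subseteq> \<Omega>"
  obtains c \<rho> where "0 \<le> c" "0 \<le> \<rho>" "\<rho> < 1"
    "\<And>\<alpha> z w. \<alpha> \<in> S_p p \<Omega> lam \<Longrightarrow> z \<in> K \<Longrightarrow> w \<in> K \<Longrightarrow>
       cmod (kterm p \<Omega> lam \<alpha> z w) \<le> c * (\<Prod>i\<in>UNIV. \<rho> ^ nat \<bar>\<alpha>$i\<bar>)"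
proof -
  obtain C s where Cs: "C > 0" "0 < s" "s < 1"
    "\<And>\<alpha> z. \<alpha> \<in> S_p p \<Omega> lam \<Longrightarrow> z \<in> K \<Longrightarrow>
       cmod (e_mono \<alpha> z) \<le> C * (\<Prod>i\<in>UNIV. s ^ nat \<bar>\<alpha>$i\<bar>) * lp_norm p \<Omega> lam (e_mono \<alpha>)"
    using admissible_e_mono_decay[OF assms(1,2,4,5)] by metis
  have "cmod (kterm p \<Omega> lam \<alpha> z w) \<le> C powr p * (\<Prod>i\<in>UNIV. (s powr p) ^ nat \<bar>\<alpha>$i\<bar>)"
    if "\<alpha> \<in> S_p p \<Omega> lam" "z \<in> K" "w \<in> K" for \<alpha> z w
  proof -
    have "cmod (kterm p \<Omega> lam \<alpha> z w) \<le> (C * (\<Prod>i\<in>UNIV. s ^ nat \<bar>\<alpha>$i\<bar>)) powr p"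
      using that Cs(1,2) assms(3)
      by (intro norm_kterm_le Cs(4)) (auto intro!: mult_nonneg_nonneg prod_nonneg)
    also have "\<dots> = C powr p * (\<Prod>i\<in>UNIV. (s powr p) ^ nat \<bar>\<alpha>$i\<bar>)"
      using Cs(1,2) by (simp add: powr_mult powr_prod_power)
    finally show ?thesis .
  qed
  moreover have "0 \<le> C powr p" "0 \<le> s powr p" "s powr p < 1"
    using Cs(2,3) assms(3) by (simp_all add: powr01_less_one)
  ultimately show ?thesis
    using that by blast
qed

theorem theorem3p1:
  fixes \<Omega> :: "(complex^'n) set" and p :: real and lam :: "complex^'n \<Rightarrow> ennreal"
  assumes "bounded \<Omega>" and "pseudoconvex \<Omega>" and "reinhardt \<Omega>"
    and "1 < p"
    and "weight \<Omega> lam" and "admissible p \<Omega> lam" and "multi_radial \<Omega> lam"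
  shows "\<forall>K. compact K \<and> K \<subseteq> \<Omega> \<times> \<Omega> \<longrightarrow>
           infsum (\<lambda>\<alpha>. SUP x\<in>K. ennreal (cmod (kterm p \<Omega> lam \<alpha> (fst x) (snd x)))) (S_p p \<Omega> lam) < \<infinity>"
proof (intro allI impI)
  fix K :: "((complex^'n) \<times> (complex^'n)) set" assume K: "compact K \<and> K \<subseteq> \<Omega> \<times> \<Omega>"
  define K1 where "K1 = fst ` K \<union> snd ` K"
  have "compact K1"
    unfolding K1_def using K by (intro compact_Un compact_continuous_image continuous_intros) auto
  moreover have "K1 \<subseteq> \<Omega>" "open \<Omega>"
    using K assms(2) by (auto simp: K1_def pseudoconvex_def domain_def)
  ultimately obtain c \<rho> where c\<rho>: "0 \<le> c" "0 \<le> \<rho>" "\<rho> < 1" and decay: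
    "\<And>\<alpha> z w. \<alpha> \<in> S_p p \<Omega> lam \<Longrightarrow> z \<in> K1 \<Longrightarrow> w \<in> K1 \<Longrightarrow>
       cmod (kterm p \<Omega> lam \<alpha> z w) \<le> c * (\<Prod>i\<in>UNIV. \<rho> ^ nat \<bar>\<alpha>$i\<bar>)"
    using admissible_kterm_decay[OF _ assms(6) less_imp_le[OF assms(4)]] by metis
  have "infsum (\<lambda>\<alpha>. SUP x\<in>K. ennreal (cmod (kterm p \<Omega> lam \<alpha> (fst x) (snd x)))) (S_p p \<Omega> lam)
      \<le> (\<Sum>\<^sub>\<infinity>\<alpha>\<in>S_p p \<Omega> lam. ennreal (c * (\<Prod>i\<in>UNIV. \<rho> ^ nat \<bar>\<alpha>$i\<bar>)))"
    by (intro infsum_mono SUP_least ennreal_leI decay)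
       (auto simp: K1_def nonneg_summable_on_complete)
  also have "\<dots> \<le> ennreal (c * (2 / (1 - \<rho>)) ^ CARD('n))"
    using c\<rho>(2,3,1) by (rule infsum_ennreal_prod_power_abs_le)
  also have "\<dots> < \<infinity>"
    by simp
  finally show "infsum (\<lambda>\<alpha>. SUP x\<in>K. ennreal (cmod (kterm p \<Omega> lam \<alpha> (fst x) (snd x)))) (S_p p \<Omega> lam) < \<infinity>" .
qed

end
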